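(* Let $V$ be a reflexive Banach space, $X$ a Banach space, $\gamma\in\mathcal{L}(V,X)$ with $c_\gamma:=\|\gamma\|_{\mathcal{L}(V,X)}$ and adjoint $\gamma^*\colon X^*\to V^*$. Let $A\colon V\to V^*$, $J\colon X\times X\to\mathbb{R}$ and $f\in V^*$ satisfy: (A1) $A$ is linear and bounded; (A2) $\langle Au,v\rangle_{V^*\times V}=\langle Av,u\rangle_{V^*\times V}$ for all $u,v\in V$; (A3) there is $m_A>0$ with $\langle Au,u\rangle_{V^*\times V}\ge m_A\|u\|_V^2$ for all $u\in V$; (J1) $J$ is locally Lipschitz continuous with respect to its second variable; (J2) there exist $c_0,c_1,c_2\ge 0$ with $\|\partial_2 J(w,v)\|_{X^*}\le c_0+c_1\|v\|_X+c_2\|w\|_X$ for all $w,v\in X$; (J3) there exist $m_\alpha,m_L\ge0$ such that $J_2^0(w_1,v_1;v_2-v_1)+J_2^0(w_2,v_2;v_1-v_2)\le m_\alpha\|v_1-v_2\|_X^2+m_L\|w_1-w_2\|_X\|v_1-v_2\|_X$ for all $w_1,w_2,v_1,v_2\in X$; (S) $m_A>(m_\alpha+m_L)c_\gamma^2$. Consider the problem: find $u\in V$ such that $Au+\gamma^*\partial_2 J(\gamma u,\gamma u)\ni f$. If this problem has a solution $u\in V$, then the solution is unique and satisfies $\|u\|_V\le c\,(1+\|f\|_{V^*})$ with a positive constant $c$.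
   Context: For a locally Lipschitz function $g\colon X\to\mathbb{R}$, the generalized (Clarke) directional derivative at $x$ in direction $v$ is $g^0(x;v)=\limsup_{y\to x,\lambda\searrow0}\frac{g(y+\lambda v)-g(y)}{\lambda}$, and the Clarke subdifferential is $\partial g(x)=\{\xi\in X^*:\langle\xi,v\rangle_{X^*\times X}\le g^0(x;v)\ \forall v\in X\}$. For $J\colon X\times X\to\mathbb{R}$, $\partial_2 J(w,v)$ and $J_2^0(w,v;z)$ denote the Clarke subdifferential and generalized directional derivative of $J(w,\cdot)$ at $v$ (in direction $z$). $\|\partial_2J(w,v)\|_{X^*}$ denotes $\sup\{\|\xi\|_{X^*}:\xi\in\partial_2J(w,v)\}$. *)

theory Defs
  imports "HOL-Analysis.Analysis"
begin

definition reflexive_space :: "'a::real_normed_vector itself \<Rightarrow> bool" where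
  "reflexive_space _ \<longleftrightarrow>
     (\<forall>\<Phi> :: ('a \<Rightarrow>\<^sub>L real) \<Rightarrow>\<^sub>L real. \<exists>v::'a. \<forall>\<xi>. blinfun_apply \<Phi> \<xi> = blinfun_apply \<xi> v)"

definition loc_lipschitz :: "('a::metric_space \<Rightarrow> real) \<Rightarrow> bool" where
  "loc_lipschitz g \<longleftrightarrow> (\<forall>x. \<exists>e>0. \<exists>L. L-lipschitz_on (ball x e) g)"

text \<open>Clarke generalized directional derivative:
  limsup of (g(y + t v) - g y)/t as y \<rightarrow> x and t \<searrow> 0
  (finite for locally Lipschitz g).\<close>
definition clarke_dd :: "('a::real_normed_vector \<Rightarrow> real) \<Rightarrow> 'a \<Rightarrow> 'a \<Rightarrow> real" where
  "clarke_dd g x v = real_of_ereal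
     (Limsup (nhds x \<times>\<^sub>F at_right (0::real))
        (\<lambda>(y, t). ereal ((g (y + t *\<^sub>R v) - g y) / t)))"

definition clarke_subdiff :: "('a::real_normed_vector \<Rightarrow> real) \<Rightarrow> 'a \<Rightarrow> ('a \<Rightarrow>\<^sub>L real) set" where
  "clarke_subdiff g x = {\<xi>. \<forall>v. blinfun_apply \<xi> v \<le> clarke_dd g x v}"

definition clarke_dd2 :: "('a::real_normed_vector \<Rightarrow> 'a \<Rightarrow> real) \<Rightarrow> 'a \<Rightarrow> 'a \<Rightarrow> 'a \<Rightarrow> real" where
  "clarke_dd2 J w v z = clarke_dd (J w) v z"

definition clarke_subdiff2 :: "('a::real_normed_vector \<Rightarrow> 'a \<Rightarrow> real) \<Rightarrow> 'a \<Rightarrow> 'a \<Rightarrow> ('a \<Rightarrow>\<^sub>L real) set" where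
  "clarke_subdiff2 J w v = clarke_subdiff (J w) v"

definition adjoint_op :: "('v::real_normed_vector \<Rightarrow>\<^sub>L 'x::real_normed_vector) \<Rightarrow> ('x \<Rightarrow>\<^sub>L real) \<Rightarrow> ('v \<Rightarrow>\<^sub>L real)" where
  "adjoint_op \<gamma> \<xi> = \<xi> o\<^sub>L \<gamma>"

definition is_solution ::
  "('v::real_normed_vector \<Rightarrow> ('v \<Rightarrow>\<^sub>L real)) \<Rightarrow> ('v \<Rightarrow>\<^sub>L 'x::real_normed_vector) \<Rightarrow> ('x \<Rightarrow> 'x \<Rightarrow> real)
     \<Rightarrow> ('v \<Rightarrow>\<^sub>L real) \<Rightarrow> 'v \<Rightarrow> bool" where
  "is_solution A \<gamma> J f u \<longleftrightarrow>
     (\<exists>\<xi>\<in>clarke_subdiff2 J (blinfun_apply \<gamma> u) (blinfun_apply \<gamma> u). A u + adjoint_op \<gamma> \<xi> = f)"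

end

theory Submission
  imports Defs
begin

text \<open>Test the inclusion satisfied by a solution \<open>u\<close> with \<open>u - w\<close>. The
  subgradient inequality together with (J3) on the diagonal \<open>w\<^sub>i = v\<^sub>i\<close> turns the
  multivalued term into \<open>-J\<^sub>2\<^sup>0(\<gamma>w, \<gamma>w; \<gamma>u - \<gamma>w)\<close> up to an error
  \<open>(m\<^sub>\<alpha> + m\<^sub>L) \<parallel>\<gamma>(u - w)\<parallel>\<^sup>2\<close>, which the smallness condition (S) lets the coercivity of
  \<open>A\<close> absorb. With \<open>w\<close> a second solution the remaining Clarke derivative is dominated by
  the second subgradient, giving uniqueness; with \<open>w = 0\<close> it is bounded below by
  \<open>-L \<parallel>\<gamma>u\<parallel>\<close>, \<open>L\<close> a local Lipschitz constant of \<open>J(0, \<cdot>)\<close> at \<open>0\<close>, giving the a priori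
  bound.\<close>

lemma eventually_difference_quotient_bounded:
  fixes g :: "'a::real_normed_vector \<Rightarrow> real"
  assumes lip: "L-lipschitz_on (ball x e) g" and "e > 0"
  shows "\<forall>\<^sub>F (y, t) in nhds x \<times>\<^sub>F at_right 0. \<bar>(g (y + t *\<^sub>R v) - g y) / t\<bar> \<le> L * norm v"
proof -
  let ?F = "nhds x \<times>\<^sub>F at_right (0::real)"
  have t_pos: "\<forall>\<^sub>F p in ?F. snd p > 0"
    using filterlim_snd[where F="nhds x" and G="at_right (0::real)"] eventually_at_right_less
    unfolding filterlim_iff by blast
  have "(snd \<longlongrightarrow> 0) ?F"
    using filterlim_snd[where F="nhds x" and G="at_right (0::real)"]
    by (rule filterlim_mono) (simp_all add: at_within_le_nhds)
  then have "((\<lambda>p. fst p + snd p *\<^sub>R v) \<longlongrightarrow> x + 0 *\<^sub>R v) ?F"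
    by (intro tendsto_intros filterlim_fst)
  then have moved: "\<forall>\<^sub>F p in ?F. fst p + snd p *\<^sub>R v \<in> ball x e"
    using \<open>e > 0\<close> by (intro topological_tendstoD) auto
  have base: "\<forall>\<^sub>F p in ?F. fst p \<in> ball x e"
    using filterlim_fst[where F="nhds x" and G="at_right (0::real)"] \<open>e > 0\<close>
    by (intro topological_tendstoD) auto
  show ?thesis
    using t_pos moved base
  proof eventually_elim
    case (elim p)
    obtain y t where p: "p = (y, t)" by fastforce
    have "\<bar>g (y + t *\<^sub>R v) - g y\<bar> \<le> L * dist (y + t *\<^sub>R v) y"
      using lipschitz_onD[OF lip] elim by (simp add: p dist_real_def)
    also have "\<dots> = L * norm v * t"
      using elim by (simp add: p dist_norm)
    finally show ?case
      using elim by (simp add: p pos_divide_le_eq)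
  qed
qed

lemma abs_real_of_Limsup_le:
  assumes "F \<noteq> bot" and "\<forall>\<^sub>F x in F. \<bar>f x\<bar> \<le> B"
  shows "\<bar>real_of_ereal (Limsup F (\<lambda>x. ereal (f x)))\<bar> \<le> B"
proof -
  have upper: "Limsup F (\<lambda>x. ereal (f x)) \<le> ereal B"
    using assms(2) by (intro Limsup_bounded) (auto elim: eventually_mono)
  have "ereal (- B) \<le> Liminf F (\<lambda>x. ereal (f x))"
    using assms(2) by (intro Liminf_bounded) (auto elim: eventually_mono)
  then have lower: "ereal (- B) \<le> Limsup F (\<lambda>x. ereal (f x))"
    using Liminf_le_Limsup[OF assms(1)] by (rule order_trans)
  from upper lower show ?thesis
    by (cases "Limsup F (\<lambda>x. ereal (f x))") auto
qed

lemma abs_clarke_dd_le: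
  fixes g :: "'a::real_normed_vector \<Rightarrow> real"
  assumes "L-lipschitz_on (ball x e) g" and "e > 0"
  shows "\<bar>clarke_dd g x v\<bar> \<le> L * norm v"
proof -
  let ?q = "\<lambda>(y, t). (g (y + t *\<^sub>R v) - g y) / t"
  have "nhds x \<times>\<^sub>F at_right (0::real) \<noteq> bot"
    by (simp add: prod_filter_eq_bot)
  moreover have "\<forall>\<^sub>F p in nhds x \<times>\<^sub>F at_right 0. \<bar>?q p\<bar> \<le> L * norm v"
    using eventually_difference_quotient_bounded[OF assms] by (rule eventually_mono) auto
  ultimately have "\<bar>real_of_ereal (Limsup (nhds x \<times>\<^sub>F at_right 0) (\<lambda>p. ereal (?q p)))\<bar> \<le> L * norm v"
    by (rule abs_real_of_Limsup_le)
  then show ?thesis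
    by (simp add: clarke_dd_def case_prod_unfold)
qed

lemma clarke_subdiff2_le_dd2:
  "\<xi> \<in> clarke_subdiff2 J w v \<Longrightarrow> blinfun_apply \<xi> z \<le> clarke_dd2 J w v z"
  by (simp add: clarke_subdiff2_def clarke_subdiff_def clarke_dd2_def)

lemma is_solution_weak_form:
  assumes "is_solution A \<gamma> J f u"
  obtains \<xi> where "\<xi> \<in> clarke_subdiff2 J (blinfun_apply \<gamma> u) (blinfun_apply \<gamma> u)"
    and "\<And>w. blinfun_apply (A u) w + blinfun_apply \<xi> (blinfun_apply \<gamma> w) = blinfun_apply f w"
  using assms unfolding is_solution_def
  by (metis adjoint_op_def blinfun_apply_blinfun_compose plus_blinfun.rep_eq)

lemma solution_tested_le:
  fixes A :: "'v::real_normed_vector \<Rightarrow> ('v \<Rightarrow>\<^sub>L real)" and \<gamma> :: "'v \<Rightarrow>\<^sub>L 'x::real_normed_vector"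
  assumes sol: "is_solution A \<gamma> J f u"
    and lin: "bounded_linear A"
    and coerc: "\<And>u. blinfun_apply (A u) u \<ge> m_A * (norm u)\<^sup>2"
    and mono: "\<And>z1 z2. clarke_dd2 J z1 z1 (z2 - z1) + clarke_dd2 J z2 z2 (z1 - z2) \<le> m * (norm (z1 - z2))\<^sup>2"
    and "m \<ge> 0"
  shows "(m_A - m * (norm \<gamma>)\<^sup>2) * (norm (u - w))\<^sup>2
      \<le> blinfun_apply (f - A w) (u - w)
         - clarke_dd2 J (blinfun_apply \<gamma> w) (blinfun_apply \<gamma> w) (blinfun_apply \<gamma> (u - w))"
proof -
  let ?d = "u - w" and ?z = "blinfun_apply \<gamma> (u - w)"
  obtain \<xi> where \<xi>: "\<xi> \<in> clarke_subdiff2 J (blinfun_apply \<gamma> u) (blinfun_apply \<gamma> u)"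
    and eq: "blinfun_apply (A u) ?d + blinfun_apply \<xi> ?z = blinfun_apply f ?d"
    using is_solution_weak_form[OF sol] by metis
  have "- blinfun_apply \<xi> ?z \<le> clarke_dd2 J (blinfun_apply \<gamma> u) (blinfun_apply \<gamma> u) (- ?z)"
    using clarke_subdiff2_le_dd2[OF \<xi>, of "- ?z"] by (simp add: blinfun.minus_right)
  also have "\<dots> \<le> m * (norm ?z)\<^sup>2
      - clarke_dd2 J (blinfun_apply \<gamma> w) (blinfun_apply \<gamma> w) ?z"
    using mono[of "blinfun_apply \<gamma> u" "blinfun_apply \<gamma> w"] by (simp add: blinfun.diff_right)
  also have "m * (norm ?z)\<^sup>2 \<le> m * ((norm \<gamma>)\<^sup>2 * (norm ?d)\<^sup>2)"
    using \<open>m \<ge> 0\<close> norm_blinfun[of \<gamma> ?d]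
    by (intro mult_left_mono) (simp_all add: power_mono flip: power_mult_distrib)
  finally have "- blinfun_apply \<xi> ?z \<le> m * ((norm \<gamma>)\<^sup>2 * (norm ?d)\<^sup>2)
      - clarke_dd2 J (blinfun_apply \<gamma> w) (blinfun_apply \<gamma> w) ?z"
    by simp
  moreover have "blinfun_apply (A ?d) ?d = blinfun_apply (A u) ?d - blinfun_apply (A w) ?d"
    using lin by (simp add: linear_diff bounded_linear.linear minus_blinfun.rep_eq)
  moreover note coerc[of ?d] eq
  ultimately show ?thesis
    by (simp add: minus_blinfun.rep_eq algebra_simps)
qed

lemma solution_unique:
  fixes A :: "'v::real_normed_vector \<Rightarrow> ('v \<Rightarrow>\<^sub>L real)" and \<gamma> :: "'v \<Rightarrow>\<^sub>L 'x::real_normed_vector"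
  assumes sol1: "is_solution A \<gamma> J f u1" and sol2: "is_solution A \<gamma> J f u2"
    and lin: "bounded_linear A"
    and coerc: "\<And>u. blinfun_apply (A u) u \<ge> m_A * (norm u)\<^sup>2"
    and mono: "\<And>z1 z2. clarke_dd2 J z1 z1 (z2 - z1) + clarke_dd2 J z2 z2 (z1 - z2) \<le> m * (norm (z1 - z2))\<^sup>2"
    and "m \<ge> 0" and small: "m_A > m * (norm \<gamma>)\<^sup>2"
  shows "u1 = u2"
proof -
  obtain \<xi> where \<xi>: "\<xi> \<in> clarke_subdiff2 J (blinfun_apply \<gamma> u2) (blinfun_apply \<gamma> u2)"
    and eq: "blinfun_apply (f - A u2) (u1 - u2) = blinfun_apply \<xi> (blinfun_apply \<gamma> (u1 - u2))"
    using is_solution_weak_form[OF sol2] by (metis add_diff_cancel_left' minus_blinfun.rep_eq)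
  have "(m_A - m * (norm \<gamma>)\<^sup>2) * (norm (u1 - u2))\<^sup>2 \<le> 0"
    using solution_tested_le[OF sol1 lin coerc mono \<open>m \<ge> 0\<close>, of u2]
      clarke_subdiff2_le_dd2[OF \<xi>, of "blinfun_apply \<gamma> (u1 - u2)"] eq
    by linarith
  with small show ?thesis
    by (simp add: mult_le_0_iff)
qed

lemma solution_norm_le:
  fixes A :: "'v::real_normed_vector \<Rightarrow> ('v \<Rightarrow>\<^sub>L real)" and \<gamma> :: "'v \<Rightarrow>\<^sub>L 'x::real_normed_vector"
  assumes sol: "is_solution A \<gamma> J f u"
    and lin: "bounded_linear A"
    and coerc: "\<And>u. blinfun_apply (A u) u \<ge> m_A * (norm u)\<^sup>2"
    and mono: "\<And>z1 z2. clarke_dd2 J z1 z1 (z2 - z1) + clarke_dd2 J z2 z2 (z1 - z2) \<le> m * (norm (z1 - z2))\<^sup>2"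
    and "m \<ge> 0"
    and lip: "L-lipschitz_on (ball 0 e) (J 0)" "e > 0"
  shows "(m_A - m * (norm \<gamma>)\<^sup>2) * norm u \<le> norm f + L * norm \<gamma>" (is "?\<delta> * _ \<le> _")
proof -
  have "L \<ge> 0"
    using lip(1) by (rule lipschitz_on_nonneg)
  have "L * norm (blinfun_apply \<gamma> u) \<le> L * (norm \<gamma> * norm u)"
    using norm_blinfun \<open>L \<ge> 0\<close> by (rule mult_left_mono)
  then have "- clarke_dd2 J 0 0 (blinfun_apply \<gamma> u) \<le> L * (norm \<gamma> * norm u)"
    using abs_clarke_dd_le[OF lip, of "blinfun_apply \<gamma> u"] unfolding clarke_dd2_def by linarith
  moreover have "blinfun_apply f u \<le> norm f * norm u"
    using norm_blinfun[of f u] by simp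
  moreover note solution_tested_le[OF sol lin coerc mono \<open>m \<ge> 0\<close>, of 0]
  ultimately have key: "?\<delta> * norm u * norm u \<le> (norm f + L * norm \<gamma>) * norm u"
    using linear_0[OF bounded_linear.linear[OF lin]] by (simp add: power2_eq_square algebra_simps)
  show ?thesis
  proof (cases "u = 0")
    case False
    then show ?thesis
      using key by (simp add: mult_right_le_imp_le)
  qed (simp add: \<open>L \<ge> 0\<close>)
qed

theorem lemma1:
  fixes A :: "'v::banach \<Rightarrow> ('v \<Rightarrow>\<^sub>L real)"
    and \<gamma> :: "'v \<Rightarrow>\<^sub>L 'x::banach"
    and J :: "'x \<Rightarrow> 'x \<Rightarrow> real"
    and m_A m_\<alpha> m_L c0 c1 c2 :: real
  assumes V_refl: "reflexive_space TYPE('v)"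
    and A1: "bounded_linear A"
    and A2: "\<And>u v. blinfun_apply (A u) v = blinfun_apply (A v) u"
    and A3: "m_A > 0" "\<And>u. blinfun_apply (A u) u \<ge> m_A * (norm u)\<^sup>2"
    and J1: "\<And>w. loc_lipschitz (J w)"
    and J2: "c0 \<ge> 0" "c1 \<ge> 0" "c2 \<ge> 0"
      "\<And>w v \<xi>. \<xi> \<in> clarke_subdiff2 J w v \<Longrightarrow> norm \<xi> \<le> c0 + c1 * norm v + c2 * norm w"
    and J3: "m_\<alpha> \<ge> 0" "m_L \<ge> 0"
      "\<And>w1 w2 v1 v2. clarke_dd2 J w1 v1 (v2 - v1) + clarke_dd2 J w2 v2 (v1 - v2)
          \<le> m_\<alpha> * (norm (v1 - v2))\<^sup>2 + m_L * norm (w1 - w2) * norm (v1 - v2)"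
    and S: "m_A > (m_\<alpha> + m_L) * (norm \<gamma>)\<^sup>2"
  shows "(\<forall>f u1 u2. is_solution A \<gamma> J f u1 \<and> is_solution A \<gamma> J f u2 \<longrightarrow> u1 = u2)
       \<and> (\<exists>c>0. \<forall>f u. is_solution A \<gamma> J f u \<longrightarrow> norm u \<le> c * (1 + norm f))"
proof -
  let ?m = "m_\<alpha> + m_L"
  let ?\<delta> = "m_A - ?m * (norm \<gamma>)\<^sup>2"
  have m: "?m \<ge> 0" using J3(1,2) by simp
  have mono: "clarke_dd2 J z1 z1 (z2 - z1) + clarke_dd2 J z2 z2 (z1 - z2) \<le> ?m * (norm (z1 - z2))\<^sup>2"
    for z1 z2
    using J3(3)[of z1 z1 z2 z2] by (simp add: power2_eq_square algebra_simps)
  obtain e L where lip: "L-lipschitz_on (ball 0 e) (J 0)" "e > 0"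
    using J1[of 0] unfolding loc_lipschitz_def by blast
  have "L \<ge> 0" using lip(1) by (rule lipschitz_on_nonneg)
  have "norm u \<le> (1 + L * norm \<gamma>) / ?\<delta> * (1 + norm f)" if "is_solution A \<gamma> J f u" for f u
  proof -
    have "?\<delta> * norm u \<le> norm f + L * norm \<gamma>"
      using solution_norm_le[OF that A1 A3(2) mono m lip] .
    also have "\<dots> \<le> (1 + L * norm \<gamma>) * (1 + norm f)"
      using \<open>L \<ge> 0\<close> by (simp add: algebra_simps)
    finally show ?thesis
      using S by (simp add: pos_le_divide_eq mult.commute)
  qed
  moreover have "(1 + L * norm \<gamma>) / ?\<delta> > 0"
    using S \<open>L \<ge> 0\<close> by (simp add: add_pos_nonneg)
  ultimately show ?thesis
    using solution_unique[OF _ _ A1 A3(2) mono m S] by blast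
qed

end
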